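(* Let $\lambda>0$, $r\in(0,1)$, $m\in(r,1)$, $v\in(0,D(m))$, $U(w)=-e^{-\lambda w}$, and let $X$ have distribution function $F_{m,v}$. Let $\gamma^*_{\lambda,r}(m,v)$ be the maximizer over $\gamma\in[0,1]$ of $\mathbb E\,U(1+r+\gamma(X-r))$. Then $\gamma^*_{\lambda,r}(m,v)\in[\gamma^{\min}_{\lambda,r}(m),1]$, where $\gamma^{\min}_{\lambda,r}(m)=\min\left\{\frac1\lambda\ln\!\left(\frac{m(1-r)}{r(1-m)}\right),1\right\}$.
   Context: $D(m)=m-m^2$. For $0<v<D(m)$, $F_{m,v}$ is the distribution function of the Beta$(\alpha,\beta)$ law (density $x^{\alpha-1}(1-x)^{\beta-1}/B(\alpha,\beta)$ on $(0,1)$) with $\alpha=\frac{m(m-m^2-v)}{v}$, $\beta=\frac{(1-m)(m-m^2-v)}{v}$, i.e. the Beta law with mean $m$ and variance $v$. Initial wealth is normalized to 1; $\gamma$ is the fraction invested in the risky return $X$, the rest earning the risk-free return $r$. *)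

theory Defs
  imports "HOL-Probability.Probability"
begin

definition D :: "real \<Rightarrow> real" where
  "D m = m - m^2"

definition beta_alpha :: "real \<Rightarrow> real \<Rightarrow> real" where
  "beta_alpha m v = m * (m - m^2 - v) / v"

definition beta_beta :: "real \<Rightarrow> real \<Rightarrow> real" where
  "beta_beta m v = (1 - m) * (m - m^2 - v) / v"

definition beta_density :: "real \<Rightarrow> real \<Rightarrow> real \<Rightarrow> real" where
  "beta_density a b x =
     (if 0 < x \<and> x < 1 then x powr (a - 1) * (1 - x) powr (b - 1) / Beta a b else 0)"

text \<open>The law with distribution function F_{m,v}: Beta law with mean m and variance v.\<close>
definition beta_law :: "real \<Rightarrow> real \<Rightarrow> real measure" where
  "beta_law m v = density lborel (\<lambda>x. ennreal (beta_density (beta_alpha m v) (beta_beta m v) x))"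

definition U_exp :: "real \<Rightarrow> real \<Rightarrow> real" where
  "U_exp lam w = - exp (- lam * w)"

definition exp_util :: "real \<Rightarrow> real \<Rightarrow> real \<Rightarrow> real \<Rightarrow> real \<Rightarrow> real" where
  "exp_util lam r m v g = (\<integral>x. U_exp lam (1 + r + g * (x - r)) \<partial>beta_law m v)"

definition is_opt_fraction :: "real \<Rightarrow> real \<Rightarrow> real \<Rightarrow> real \<Rightarrow> real \<Rightarrow> bool" where
  "is_opt_fraction lam r m v g \<longleftrightarrow>
     g \<in> {0..1} \<and> (\<forall>h\<in>{0..1}. exp_util lam r m v h \<le> exp_util lam r m v g)"

definition gamma_min :: "real \<Rightarrow> real \<Rightarrow> real \<Rightarrow> real" where
  "gamma_min lam r m = min ((1 / lam) * ln (m * (1 - r) / (r * (1 - m)))) 1"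

end

theory Submission
  imports Defs
begin

text \<open>
  The expected utility \<open>EU(\<gamma>) = E U(1 + r + \<gamma>(X - r))\<close> is \<open>\<lambda>\<close>-Lipschitz in \<open>\<gamma>\<close>, so it
  attains its maximum on \<open>[0,1]\<close>. For \<open>\<gamma> < \<delta>\<close>, concavity of \<open>U\<close> gives
  \<open>EU(\<delta>) - EU(\<gamma>) \<ge> \<lambda>(\<delta> - \<gamma>) exp(-\<lambda>(1 + r)) E \<phi>(X)\<close> with \<open>\<phi>(x) = (x - r) exp(-\<lambda>\<delta>(x - r))\<close>.
  On \<open>[0,1]\<close> the function \<open>\<phi>\<close> lies above its chord, so \<open>E \<phi>(X) \<ge> (1 - m) \<phi>(0) + m \<phi>(1)\<close>,
  which is positive exactly when \<open>\<lambda>\<delta> < ln(m(1 - r) / (r(1 - m)))\<close>. Hence \<open>EU\<close> is strictly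
  increasing below \<open>gamma_min\<close> and no maximizer lies there.
\<close>

lemma Beta_real_pos: "0 < (a::real) \<Longrightarrow> 0 < b \<Longrightarrow> 0 < Beta a b"
  unfolding Beta_def by (intro divide_pos_pos mult_pos_pos Gamma_real_pos) auto

lemma beta_density_measurable[measurable]: "beta_density a b \<in> borel_measurable borel"
  unfolding beta_density_def by measurable

lemma sets_beta_law[measurable_cong]: "sets (beta_law m v) = sets borel"
  unfolding beta_law_def by simp

lemma nn_integral_beta_density_power:
  fixes a b :: real and k :: nat
  assumes "0 < a" "0 < b"
  shows "(\<integral>\<^sup>+x. ennreal (beta_density a b x) * ennreal (x ^ k) \<partial>lborel)
           = ennreal (Beta (a + k) b / Beta a b)"
proof -
  have B: "0 < Beta a b" using Beta_real_pos assms by simp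
  have "ennreal (beta_density a b x) * ennreal (x ^ k)
          = ennreal (x powr (a + k - 1) * (1 - x) powr (b - 1) / Beta a b) * indicator {0..1} x" for x
  proof (cases "0 < x \<and> x < 1")
    case True
    then have "x powr (a - 1) * x ^ k = x powr (a + k - 1)"
      using powr_add[of x "a - 1" k] by (simp add: powr_realpow algebra_simps)
    then show ?thesis
      using True B by (simp add: beta_density_def ennreal_mult''[symmetric] indicator_def algebra_simps)
  qed (auto simp: beta_density_def indicator_def)
  then have "(\<integral>\<^sup>+x. ennreal (beta_density a b x) * ennreal (x ^ k) \<partial>lborel)
      = (\<integral>\<^sup>+x. ennreal (x powr (a + k - 1) * (1 - x) powr (b - 1) / Beta a b) * indicator {0..1} x \<partial>lborel)"
    by simp
  also have "\<dots> = ennreal (Beta (a + k) b / Beta a b)"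
  proof (rule nn_integral_has_integral_lebesgue')
    show "((\<lambda>x. x powr (a + k - 1) * (1 - x) powr (b - 1) / Beta a b) has_integral (Beta (a + k) b / Beta a b)) {0..1}"
      using has_integral_divide[OF has_integral_Beta_real[of "a + k" b], of "Beta a b"] assms by simp
  qed (use B in auto)
  finally show ?thesis .
qed

lemma Beta_plus1_left_real:
  fixes a b :: real
  assumes "0 < a" "0 < b"
  shows "Beta (a + 1) b = a / (a + b) * Beta a b"
proof -
  have "a \<notin> \<int>\<^sub>\<le>\<^sub>0" using assms by (auto elim!: nonpos_Ints_cases)
  from Beta_plus1_left[OF this, of b] show ?thesis
    using assms by (simp add: field_simps)
qed

lemma beta_law_props:
  fixes m v :: real
  assumes "0 < m" "m < 1" "0 < v" "v < D m"
  shows prob_space_beta_law: "prob_space (beta_law m v)"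
    and AE_beta_law_unit: "AE x in beta_law m v. 0 < x \<and> x < 1"
    and beta_law_mean: "(\<integral>x. x \<partial>beta_law m v) = m"
proof -
  define a where "a = beta_alpha m v"
  define b where "b = beta_beta m v"
  have w: "0 < m - m^2 - v" using assms by (simp add: D_def)
  have a: "0 < a" and b: "0 < b"
    unfolding a_def b_def beta_alpha_def beta_beta_def using assms w by simp_all
  have "a + b = (m - m^2 - v) / v"
    unfolding a_def b_def beta_alpha_def beta_beta_def using assms by (simp add: field_simps power2_eq_square)
  then have mean: "a / (a + b) = m"
    using w assms by (simp add: a_def beta_alpha_def)
  have M: "beta_law m v = density lborel (\<lambda>x. ennreal (beta_density a b x))"
    unfolding beta_law_def a_def b_def ..
  have "emeasure (beta_law m v) UNIV = ennreal (Beta (a + real 0) b / Beta a b)"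
    unfolding M by (subst emeasure_density) (use nn_integral_beta_density_power[OF a b, of 0] in auto)
  then show "prob_space (beta_law m v)"
    using Beta_real_pos[OF a b] by (intro prob_spaceI) (simp add: M)
  show AE: "AE x in beta_law m v. 0 < x \<and> x < 1"
    unfolding M by (subst AE_density) (auto simp: beta_density_def split: if_splits)
  have "has_bochner_integral (beta_law m v) (\<lambda>x. x) m"
  proof (rule has_bochner_integral_nn_integral)
    show "AE x in beta_law m v. 0 \<le> x" using AE by eventually_elim auto
    show "(\<integral>\<^sup>+x. ennreal x \<partial>beta_law m v) = ennreal m"
      unfolding M using nn_integral_beta_density_power[OF a b, of 1] Beta_real_pos[OF a b]
      by (simp add: nn_integral_density Beta_plus1_left_real[OF a b] mean)
  qed (use assms in auto)
  then show "(\<integral>x. x \<partial>beta_law m v) = m"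
    by (simp add: has_bochner_integral_iff)
qed

lemma U_exp_diff_bounds:
  fixes lam w w' :: real
  shows U_exp_diff_lower: "lam * exp (- lam * w') * (w' - w) \<le> U_exp lam w' - U_exp lam w"
    and U_exp_diff_upper: "U_exp lam w' - U_exp lam w \<le> lam * exp (- lam * w) * (w' - w)"
proof -
  have "exp (- lam * w') * (1 + lam * (w' - w)) \<le> exp (- lam * w') * exp (lam * (w' - w))"
    by (intro mult_left_mono exp_ge_add_one_self) simp
  also have "\<dots> = exp (- lam * w)" by (simp flip: exp_add add: algebra_simps)
  finally show "lam * exp (- lam * w') * (w' - w) \<le> U_exp lam w' - U_exp lam w"
    by (simp add: U_exp_def algebra_simps)
  have "exp (- lam * w) * (1 - lam * (w' - w)) \<le> exp (- lam * w) * exp (- lam * (w' - w))"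
    using exp_ge_add_one_self[of "- lam * (w' - w)"] by (intro mult_left_mono) simp_all
  also have "\<dots> = exp (- lam * w')" by (simp flip: exp_add add: algebra_simps)
  finally show "U_exp lam w' - U_exp lam w \<le> lam * exp (- lam * w) * (w' - w)"
    by (simp add: U_exp_def algebra_simps)
qed

lemma U_exp_lipschitz:
  fixes lam w w' :: real
  assumes "0 \<le> lam" "0 \<le> w" "0 \<le> w'"
  shows "\<bar>U_exp lam w' - U_exp lam w\<bar> \<le> lam * \<bar>w' - w\<bar>"
proof -
  have *: "\<bar>U_exp lam t' - U_exp lam t\<bar> \<le> lam * \<bar>t' - t\<bar>" if "0 \<le> t" "t \<le> t'" for t t'
  proof -
    have "0 \<le> lam * exp (- lam * t') * (t' - t)" using assms that by simp
    also have "\<dots> \<le> U_exp lam t' - U_exp lam t" by (rule U_exp_diff_lower)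
    finally have "\<bar>U_exp lam t' - U_exp lam t\<bar> = U_exp lam t' - U_exp lam t" by simp
    also have "\<dots> \<le> lam * exp (- lam * t) * (t' - t)" by (rule U_exp_diff_upper)
    also have "\<dots> \<le> lam * 1 * (t' - t)"
      using assms that by (intro mult_right_mono mult_left_mono) auto
    finally show ?thesis using that by simp
  qed
  show ?thesis
    using *[of w w'] *[of w' w] assms by (cases "w \<le> w'") (auto simp: abs_minus_commute)
qed

definition exp_tilt :: "real \<Rightarrow> real \<Rightarrow> real \<Rightarrow> real" where
  "exp_tilt r c x = (x - r) * exp (- c * (x - r))"

text \<open>
  After multiplication by \<open>exp(-c r)\<close> the claim reads \<open>(x - r) exp(-c x) \<ge> \<dots>\<close>. For \<open>x < r\<close>
  this is convexity of \<open>exp(-c x)\<close>, multiplied by the negative factor \<open>x - r\<close>; for \<open>x \<ge> r\<close>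
  it is the tangent bound \<open>exp(c(1 - x)) \<ge> 1 + c(1 - x)\<close>.
\<close>
lemma exp_tilt_above_chord:
  fixes c r x :: real
  assumes c: "0 \<le> c" and r: "0 < r" "r < 1" and x: "0 \<le> x" "x \<le> 1"
  shows "(1 - x) * exp_tilt r c 0 + x * exp_tilt r c 1 \<le> exp_tilt r c x"
proof -
  define F where "F = (x - r) * exp (- c * x) + (1 - x) * r - x * (1 - r) * exp (- c)"
  have ec: "exp (- c) \<le> 1" using c by simp
  have "0 \<le> F"
  proof (cases "x < r")
    case True
    have "exp (- c * x) = exp ((1 - x) *\<^sub>R 0 + x *\<^sub>R (- c))" by (simp add: algebra_simps)
    also have "\<dots> \<le> (1 - x) * exp 0 + x * exp (- c)"
      by (rule convex_onD[OF exp_convex]) (use x in auto)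
    finally have "(x - r) * ((1 - x) + x * exp (- c)) \<le> (x - r) * exp (- c * x)"
      using True by (intro mult_left_mono_neg) auto
    then have "x * (1 - x) * (1 - exp (- c)) \<le> F" unfolding F_def by (simp add: algebra_simps)
    moreover have "0 \<le> x * (1 - x) * (1 - exp (- c))" using x ec by simp
    ultimately show ?thesis by linarith
  next
    case False
    have "exp (- c) * (1 + c * (1 - x)) \<le> exp (- c) * exp (c * (1 - x))"
      by (intro mult_left_mono exp_ge_add_one_self) simp
    also have "exp (- c) * exp (c * (1 - x)) = exp (- c * x)" by (simp add: algebra_simps flip: exp_add)
    finally have "(x - r) * (exp (- c) * (1 + c * (1 - x))) \<le> (x - r) * exp (- c * x)"
      using False by (intro mult_left_mono) auto
    then have "(1 - x) * (r * (1 - exp (- c)) + c * (x - r) * exp (- c)) \<le> F"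
      unfolding F_def by (simp add: algebra_simps)
    moreover have "0 \<le> (1 - x) * (r * (1 - exp (- c)) + c * (x - r) * exp (- c))"
      using x ec r c False by (intro mult_nonneg_nonneg add_nonneg_nonneg) auto
    ultimately show ?thesis by linarith
  qed
  then have "0 \<le> exp (c * r) * F" by simp
  moreover have "exp (c * r) * F = (x - r) * exp (- c * (x - r))
      - ((1 - x) * (- r * exp (c * r)) + x * ((1 - r) * exp (- c * (1 - r))))"
    unfolding F_def by (simp add: algebra_simps flip: exp_add)
  ultimately show ?thesis by (simp add: exp_tilt_def)
qed

lemma exp_tilt_chord_pos:
  fixes c r m :: real
  assumes "r * (1 - m) * exp c < m * (1 - r)"
  shows "0 < (1 - m) * exp_tilt r c 0 + m * exp_tilt r c 1"
proof -
  have "exp (- c) * (r * (1 - m) * exp c) < exp (- c) * (m * (1 - r))"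
    using assms by simp
  moreover have "exp (- c) * (r * (1 - m) * exp c) = r * (1 - m)"
    by (simp add: mult.commute mult.left_commute flip: exp_add)
  ultimately have "0 < exp (- c) * (m * (1 - r)) - r * (1 - m)"
    by linarith
  then have "0 < exp (c * r) * (exp (- c) * (m * (1 - r)) - r * (1 - m))"
    by simp
  also have "\<dots> = (1 - m) * exp_tilt r c 0 + m * exp_tilt r c 1"
    by (simp add: exp_tilt_def algebra_simps flip: exp_add)
  finally show ?thesis .
qed

locale exp_utility_unit_law = prob_space M for M :: "real measure" +
  fixes lam r :: real
  assumes sets_M: "sets M = sets borel"
    and AE_unit: "AE x in M. 0 < x \<and> x < 1"
    and lam_pos: "0 < lam"
    and r_pos: "0 < r" and r_less_1: "r < 1"
begin

lemmas [measurable_cong] = sets_M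

definition wealth :: "real \<Rightarrow> real \<Rightarrow> real" where
  "wealth g x = 1 + r + g * (x - r)"

definition expected_utility :: "real \<Rightarrow> real" where
  "expected_utility g = expectation (\<lambda>x. U_exp lam (wealth g x))"

abbreviation mean :: real where
  "mean \<equiv> expectation (\<lambda>x. x)"

lemma wealth_ge_1:
  assumes "g \<in> {0..1}" "0 < x"
  shows "1 \<le> wealth g x"
proof -
  have "g * r \<le> 1 * r" using assms r_pos by (intro mult_right_mono) auto
  moreover have "0 \<le> g * x" using assms by simp
  ultimately show ?thesis by (simp add: wealth_def algebra_simps)
qed

lemma wealth_diff: "wealth h x - wealth g x = (h - g) * (x - r)"
  by (simp add: wealth_def algebra_simps)

lemma integrable_utility:
  assumes "g \<in> {0..1}"
  shows "integrable M (\<lambda>x. U_exp lam (wealth g x))"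
proof (rule integrable_const_bound[where B = 1])
  show "AE x in M. norm (U_exp lam (wealth g x)) \<le> 1"
    using AE_unit
  proof eventually_elim
    case (elim x)
    then show ?case
      using wealth_ge_1[OF assms, of x] lam_pos by (simp add: U_exp_def)
  qed
qed (simp add: U_exp_def wealth_def)

lemma integrable_id: "integrable M (\<lambda>x. x)"
  by (rule integrable_const_bound[where B = 1]) (use AE_unit in \<open>auto elim: AE_mp\<close>)

lemma expected_utility_lipschitz: "lam-lipschitz_on {0..1} expected_utility"
proof (rule lipschitz_onI)
  fix g h :: real assume g: "g \<in> {0..1}" and h: "h \<in> {0..1}"
  define K where "K = lam * \<bar>g - h\<bar>"
  have "AE x in M. \<bar>U_exp lam (wealth g x) - U_exp lam (wealth h x)\<bar> \<le> K"
    using AE_unit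
  proof eventually_elim
    case (elim x)
    have "\<bar>U_exp lam (wealth g x) - U_exp lam (wealth h x)\<bar> \<le> lam * \<bar>(g - h) * (x - r)\<bar>"
      using U_exp_lipschitz[of lam "wealth h x" "wealth g x"] wealth_ge_1[OF g, of x] wealth_ge_1[OF h, of x]
        elim lam_pos by (simp add: wealth_diff)
    also have "\<dots> \<le> K"
      unfolding K_def abs_mult using elim r_pos r_less_1 lam_pos
      by (intro mult_left_mono mult_right_le_one_le) auto
    finally show ?case .
  qed
  moreover have "expected_utility g - expected_utility h
      = expectation (\<lambda>x. U_exp lam (wealth g x) - U_exp lam (wealth h x))"
    unfolding expected_utility_def using integrable_utility[OF g] integrable_utility[OF h] by simp
  moreover have "integrable M (\<lambda>x. U_exp lam (wealth g x) - U_exp lam (wealth h x))"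
    using integrable_utility[OF g] integrable_utility[OF h] by simp
  ultimately have "- K \<le> expected_utility g - expected_utility h"
    and "expected_utility g - expected_utility h \<le> K"
    by (auto intro!: integral_ge_const integral_le_const elim: AE_mp)
  then show "dist (expected_utility g) (expected_utility h) \<le> lam * dist g h"
    by (simp add: K_def dist_real_def)
qed (use lam_pos in simp)

lemma expected_utility_attains_max:
  "\<exists>g\<in>{0..1}. \<forall>h\<in>{0..1}. expected_utility h \<le> expected_utility g"
  using continuous_attains_sup[OF compact_Icc _ lipschitz_on_continuous_on[OF expected_utility_lipschitz]]
  by auto

lemma utility_gain_ge_chord:
  assumes "g \<le> h" "0 \<le> h" "0 < x" "x < 1"
  shows "lam * (h - g) * exp (- lam * (1 + r))
           * ((1 - x) * exp_tilt r (lam * h) 0 + x * exp_tilt r (lam * h) 1)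
         \<le> U_exp lam (wealth h x) - U_exp lam (wealth g x)"
proof -
  have "0 \<le> lam * (h - g) * exp (- lam * (1 + r))"
    using assms lam_pos by simp
  then have "lam * (h - g) * exp (- lam * (1 + r))
           * ((1 - x) * exp_tilt r (lam * h) 0 + x * exp_tilt r (lam * h) 1)
         \<le> lam * (h - g) * exp (- lam * (1 + r)) * exp_tilt r (lam * h) x"
    using exp_tilt_above_chord[of "lam * h" r x] assms lam_pos r_pos r_less_1
    by (intro mult_left_mono) simp_all
  also have "\<dots> = lam * exp (- lam * wealth h x) * (wealth h x - wealth g x)"
    by (simp add: exp_tilt_def wealth_def algebra_simps flip: exp_add)
  also have "\<dots> \<le> U_exp lam (wealth h x) - U_exp lam (wealth g x)"
    by (rule U_exp_diff_lower)
  finally show ?thesis .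
qed

lemma expected_utility_strict_mono:
  assumes g: "g \<in> {0..1}" and h: "h \<in> {0..1}" and "g < h"
    and below: "r * (1 - mean) * exp (lam * h) < mean * (1 - r)"
  shows "expected_utility g < expected_utility h"
proof -
  define A where "A = lam * (h - g) * exp (- lam * (1 + r))"
  define \<phi> where "\<phi> = exp_tilt r (lam * h)"
  have "A * ((1 - mean) * \<phi> 0 + mean * \<phi> 1) = expectation (\<lambda>x. A * ((1 - x) * \<phi> 0 + x * \<phi> 1))"
    using integrable_id by (simp add: algebra_simps prob_space)
  also have "\<dots> \<le> expectation (\<lambda>x. U_exp lam (wealth h x) - U_exp lam (wealth g x))"
  proof (rule integral_mono_AE)
    show "AE x in M. A * ((1 - x) * \<phi> 0 + x * \<phi> 1) \<le> U_exp lam (wealth h x) - U_exp lam (wealth g x)"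
      using AE_unit by eventually_elim (use utility_gain_ge_chord \<open>g < h\<close> h in \<open>auto simp: A_def \<phi>_def\<close>)
  qed (use integrable_id integrable_utility[OF g] integrable_utility[OF h] in simp_all)
  also have "\<dots> = expected_utility h - expected_utility g"
    unfolding expected_utility_def using integrable_utility[OF g] integrable_utility[OF h] by simp
  finally have "A * ((1 - mean) * \<phi> 0 + mean * \<phi> 1) \<le> expected_utility h - expected_utility g" .
  moreover have "0 < A * ((1 - mean) * \<phi> 0 + mean * \<phi> 1)"
    using exp_tilt_chord_pos[OF below] lam_pos \<open>g < h\<close> by (simp add: A_def \<phi>_def)
  ultimately show ?thesis by linarith
qed

end

lemma less_gamma_min_imp_exp_less:
  fixes lam r m h :: real
  assumes "0 < lam" "0 < r" "r < 1" "0 < m" "m < 1" "h < gamma_min lam r m"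
  shows "r * (1 - m) * exp (lam * h) < m * (1 - r)"
proof -
  have q: "0 < m * (1 - r) / (r * (1 - m))" using assms by simp
  have "lam * h < ln (m * (1 - r) / (r * (1 - m)))"
    using assms by (simp add: gamma_min_def field_simps)
  then have "exp (lam * h) < m * (1 - r) / (r * (1 - m))"
    using q by (metis exp_less_cancel_iff exp_ln)
  then show ?thesis using assms by (simp add: field_simps)
qed

theorem lemma4:
  fixes lam r m v :: real
  assumes "lam > 0" and "0 < r" and "r < 1" and "r < m" and "m < 1"
    and "0 < v" and "v < D m"
  shows "(\<exists>g. is_opt_fraction lam r m v g) \<and>
         (\<forall>g. is_opt_fraction lam r m v g \<longrightarrow> g \<in> {gamma_min lam r m..1})"
proof -
  have mv: "0 < m" "m < 1" "0 < v" "v < D m" using assms by simp_all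
  interpret exp_utility_unit_law "beta_law m v" lam r
    using prob_space_beta_law[OF mv] AE_beta_law_unit[OF mv] assms
    by (intro exp_utility_unit_law.intro exp_utility_unit_law_axioms.intro) (simp_all add: sets_beta_law)
  have opt: "is_opt_fraction lam r m v g \<longleftrightarrow>
      g \<in> {0..1} \<and> (\<forall>h\<in>{0..1}. expected_utility h \<le> expected_utility g)" for g
    by (simp add: is_opt_fraction_def exp_util_def expected_utility_def wealth_def)
  have "gamma_min lam r m \<le> g" if g: "is_opt_fraction lam r m v g" for g
  proof (rule ccontr)
    assume "\<not> gamma_min lam r m \<le> g"
    define h where "h = (g + gamma_min lam r m) / 2"
    have "gamma_min lam r m \<le> 1" by (simp add: gamma_min_def)
    then have "g < h" "h < gamma_min lam r m" "h \<in> {0..1}"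
      using \<open>\<not> gamma_min lam r m \<le> g\<close> g by (auto simp: h_def opt)
    then have "expected_utility g < expected_utility h"
      using g less_gamma_min_imp_exp_less[OF assms(1-3) mv(1,2)] beta_law_mean[OF mv]
      by (intro expected_utility_strict_mono) (auto simp: opt)
    moreover have "expected_utility h \<le> expected_utility g"
      using g \<open>h \<in> {0..1}\<close> by (simp add: opt)
    ultimately show False by simp
  qed
  then show ?thesis
    using expected_utility_attains_max by (auto simp: opt)
qed

end
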